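(* Let $X$ be a locale with frame presentation $\mathcal{O}X = \langle G \mid R\rangle$, let $i_X\colon X \hookrightarrow \Sigma^G$ be the corresponding sublocale inclusion, and let $\mathrm{ev}\colon \Sigma^{\Sigma^G}\times\Sigma^G\to\Sigma$ be the evaluation map of the exponential $\Sigma^{\Sigma^G}$. Define $\widetilde{\mathrm{ev}} = \mathrm{ev}\circ(\Sigma^{\Sigma^G}\times i_X)\colon \Sigma^{\Sigma^G}\times X\to\Sigma$. Then $(\Sigma^{\Sigma^G},\widetilde{\mathrm{ev}})$ is a weak exponential with base $\Sigma$ and exponent $X$ in the category of locales: for every locale $A$ and every locale map $u\colon A\times X\to\Sigma$ there exists a (not necessarily unique) locale map $v\colon A\to\Sigma^{\Sigma^G}$ with $u=\widetilde{\mathrm{ev}}\circ(v\times X)$.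
   Context: A frame is a complete lattice in which finite meets distribute over arbitrary joins; a locale $X$ is formally a frame $\mathcal{O}X$ (its "opens"), and a locale map $f\colon X\to Y$ is a frame homomorphism $f^*\colon\mathcal{O}Y\to\mathcal{O}X$ (preserving finite meets and arbitrary joins). $\Sigma$ denotes the Sierpiński locale, whose frame is the free frame on one generator; locale maps $X\to\Sigma$ correspond to elements of $\mathcal{O}X$. For a set $G$, $\Sigma^G$ denotes the locale whose frame is the free frame on $G$ (the frame of downsets of the meet-semilattice of finite subsets of $G$ ordered by reverse inclusion). $\Sigma^G$ is locally compact, so the exponential $\Sigma^{\Sigma^G}$ exists in locales. A presentation $\mathcal{O}X=\langle G\mid R\rangle$ (with $R$ a set of pairs of elements of the free frame on $G$) means $\mathcal{O}X$ is the quotient of the free frame on $G$ by the frame congruence generated by $R$; the quotient homomorphism is $i_X^*$ for a sublocale inclusion $i_X\colon X\hookrightarrow\Sigma^G$. *)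

theory Defs
  imports Main
begin

record 'a frm =
  fcar :: "'a set"
  fle  :: "'a \<Rightarrow> 'a \<Rightarrow> bool"

definition is_lub :: "('a, 'b) frm_scheme \<Rightarrow> 'a set \<Rightarrow> 'a \<Rightarrow> bool" where
  "is_lub F S x \<longleftrightarrow> x \<in> fcar F \<and> (\<forall>s\<in>S. fle F s x) \<and>
     (\<forall>y\<in>fcar F. (\<forall>s\<in>S. fle F s y) \<longrightarrow> fle F x y)"

definition is_glb :: "('a, 'b) frm_scheme \<Rightarrow> 'a set \<Rightarrow> 'a \<Rightarrow> bool" where
  "is_glb F S x \<longleftrightarrow> x \<in> fcar F \<and> (\<forall>s\<in>S. fle F x s) \<and>
     (\<forall>y\<in>fcar F. (\<forall>s\<in>S. fle F y s) \<longrightarrow> fle F y x)"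

definition fsup :: "('a, 'b) frm_scheme \<Rightarrow> 'a set \<Rightarrow> 'a" where
  "fsup F S = (THE x. is_lub F S x)"

definition fmeet :: "('a, 'b) frm_scheme \<Rightarrow> 'a \<Rightarrow> 'a \<Rightarrow> 'a" where
  "fmeet F a b = (THE x. is_glb F {a, b} x)"

definition ftop :: "('a, 'b) frm_scheme \<Rightarrow> 'a" where
  "ftop F = fsup F (fcar F)"

definition is_frame :: "('a, 'b) frm_scheme \<Rightarrow> bool" where
  "is_frame F \<longleftrightarrow>
     (\<forall>a\<in>fcar F. fle F a a) \<and>
     (\<forall>a\<in>fcar F. \<forall>b\<in>fcar F. fle F a b \<and> fle F b a \<longrightarrow> a = b) \<and>
     (\<forall>a\<in>fcar F. \<forall>b\<in>fcar F. \<forall>c\<in>fcar F. fle F a b \<and> fle F b c \<longrightarrow> fle F a c) \<and>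
     (\<forall>S. S \<subseteq> fcar F \<longrightarrow> (\<exists>x. is_lub F S x)) \<and>
     (\<forall>a\<in>fcar F. \<forall>S. S \<subseteq> fcar F \<longrightarrow>
        fmeet F a (fsup F S) = fsup F ((\<lambda>s. fmeet F a s) ` S))"

definition frame_hom :: "('a, 'c) frm_scheme \<Rightarrow> ('b, 'd) frm_scheme \<Rightarrow> ('a \<Rightarrow> 'b) \<Rightarrow> bool" where
  "frame_hom F1 F2 h \<longleftrightarrow>
     (\<forall>a\<in>fcar F1. h a \<in> fcar F2) \<and>
     h (ftop F1) = ftop F2 \<and>
     (\<forall>a\<in>fcar F1. \<forall>b\<in>fcar F1. h (fmeet F1 a b) = fmeet F2 (h a) (h b)) \<and>
     (\<forall>S. S \<subseteq> fcar F1 \<longrightarrow> h (fsup F1 S) = fsup F2 (h ` S))"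

section \<open>The free frame on G, i.e. the frame of the locale Sigma^G\<close>

text \<open>Downsets of the finite subsets of G ordered by reverse inclusion,
  i.e. families of finite subsets of G closed under finite supersets.\<close>
definition free_frame_car :: "'g set \<Rightarrow> 'g set set set" where
  "free_frame_car G = {U. U \<subseteq> {F. finite F \<and> F \<subseteq> G} \<and>
      (\<forall>F\<in>U. \<forall>F'. finite F' \<and> F \<subseteq> F' \<and> F' \<subseteq> G \<longrightarrow> F' \<in> U)}"

definition free_frame :: "'g set \<Rightarrow> 'g set set frm" where
  "free_frame G = \<lparr>fcar = free_frame_car G, fle = (\<subseteq>)\<rparr>"

definition frame_congruence :: "('a, 'b) frm_scheme \<Rightarrow> ('a \<times> 'a) set \<Rightarrow> bool" where
  "frame_congruence F \<theta> \<longleftrightarrow>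
     equiv (fcar F) \<theta> \<and>
     (\<forall>a b c d. (a, b) \<in> \<theta> \<longrightarrow> (c, d) \<in> \<theta> \<longrightarrow> (fmeet F a c, fmeet F b d) \<in> \<theta>) \<and>
     (\<forall>P. P \<subseteq> \<theta> \<longrightarrow> (fsup F (fst ` P), fsup F (snd ` P)) \<in> \<theta>)"

definition gen_congruence :: "('a, 'b) frm_scheme \<Rightarrow> ('a \<times> 'a) set \<Rightarrow> ('a \<times> 'a) set" where
  "gen_congruence F R = \<Inter>{\<theta>. frame_congruence F \<theta> \<and> R \<subseteq> \<theta>}"

definition quotient_frame :: "('a, 'b) frm_scheme \<Rightarrow> ('a \<times> 'a) set \<Rightarrow> 'a set frm" where
  "quotient_frame F \<theta> = \<lparr>fcar = fcar F // \<theta>,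
     fle = (\<lambda>C D. \<exists>a b. C = \<theta> `` {a} \<and> D = \<theta> `` {b} \<and> (fmeet F a b, a) \<in> \<theta>)\<rparr>"

text \<open>O X = < G | R > and the quotient homomorphism i_X^*.\<close>
definition pres_frame :: "'g set \<Rightarrow> ('g set set \<times> 'g set set) set \<Rightarrow> 'g set set set frm" where
  "pres_frame G R = quotient_frame (free_frame G) (gen_congruence (free_frame G) R)"

definition iX :: "'g set \<Rightarrow> ('g set set \<times> 'g set set) set \<Rightarrow> 'g set set \<Rightarrow> 'g set set set" where
  "iX G R U = gen_congruence (free_frame G) R `` {U}"

section \<open>Scott topology: the frame of the exponential Sigma^Y for locally compact Y\<close>

definition directed_in :: "('a, 'b) frm_scheme \<Rightarrow> 'a set \<Rightarrow> bool" where
  "directed_in F D \<longleftrightarrow> D \<noteq> {} \<and> (\<forall>x\<in>D. \<forall>y\<in>D. \<exists>z\<in>D. fle F x z \<and> fle F y z)"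

definition scott_opens :: "('a, 'b) frm_scheme \<Rightarrow> 'a set set" where
  "scott_opens F = {S. S \<subseteq> fcar F \<and>
     (\<forall>x\<in>S. \<forall>y\<in>fcar F. fle F x y \<longrightarrow> y \<in> S) \<and>
     (\<forall>D. D \<subseteq> fcar F \<and> directed_in F D \<and> fsup F D \<in> S \<longrightarrow> (\<exists>d\<in>D. d \<in> S))}"

definition scott_frame :: "('a, 'b) frm_scheme \<Rightarrow> 'a set frm" where
  "scott_frame F = \<lparr>fcar = scott_opens F, fle = (\<subseteq>)\<rparr>"

section \<open>Products of locales: the frame coproduct O A (x) O B via C-ideals\<close>

definition is_Cideal :: "('a, 'c) frm_scheme \<Rightarrow> ('b, 'd) frm_scheme \<Rightarrow> ('a \<times> 'b) set \<Rightarrow> bool" where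
  "is_Cideal F1 F2 D \<longleftrightarrow>
     D \<subseteq> fcar F1 \<times> fcar F2 \<and>
     (\<forall>a b a' b'. (a, b) \<in> D \<and> a' \<in> fcar F1 \<and> b' \<in> fcar F2 \<and> fle F1 a' a \<and> fle F2 b' b
        \<longrightarrow> (a', b') \<in> D) \<and>
     (\<forall>a\<in>fcar F1. \<forall>S. S \<subseteq> fcar F2 \<and> {a} \<times> S \<subseteq> D \<longrightarrow> (a, fsup F2 S) \<in> D) \<and>
     (\<forall>b\<in>fcar F2. \<forall>S. S \<subseteq> fcar F1 \<and> S \<times> {b} \<subseteq> D \<longrightarrow> (fsup F1 S, b) \<in> D)"

definition tensor :: "('a, 'c) frm_scheme \<Rightarrow> ('b, 'd) frm_scheme \<Rightarrow> ('a \<times> 'b) set frm" where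
  "tensor F1 F2 = \<lparr>fcar = {D. is_Cideal F1 F2 D}, fle = (\<subseteq>)\<rparr>"

definition Cideal_closure :: "('a, 'c) frm_scheme \<Rightarrow> ('b, 'd) frm_scheme \<Rightarrow> ('a \<times> 'b) set \<Rightarrow> ('a \<times> 'b) set" where
  "Cideal_closure F1 F2 P = \<Inter>{D. is_Cideal F1 F2 D \<and> P \<subseteq> D}"

text \<open>Frame map (f x g)^* : O A (x) O B -> O A' (x) O B', determined by a (x) b |-> f a (x) g b.
  Here F1', F2' are the target frames.\<close>
definition tensor_map :: "('a2, 'c) frm_scheme \<Rightarrow> ('b2, 'd) frm_scheme \<Rightarrow>
    ('a1 \<Rightarrow> 'a2) \<Rightarrow> ('b1 \<Rightarrow> 'b2) \<Rightarrow> ('a1 \<times> 'b1) set \<Rightarrow> ('a2 \<times> 'b2) set" where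
  "tensor_map F1' F2' f g D = Cideal_closure F1' F2' ((\<lambda>(a, b). (f a, g b)) ` D)"

text \<open>ev : Sigma^(Sigma^G) x Sigma^G -> Sigma, as an element of O(Sigma^(Sigma^G) x Sigma^G):
  the C-ideal of all pairs (S, U) with S contained in the principal upset of U.\<close>
definition ev :: "'g set \<Rightarrow> ('g set set set \<times> 'g set set) set" where
  "ev G = {(S, U). S \<in> scott_opens (free_frame G) \<and> U \<in> free_frame_car G \<and> (\<forall>V\<in>S. U \<subseteq> V)}"

definition ev_tilde :: "'g set \<Rightarrow> ('g set set \<times> 'g set set) set \<Rightarrow>
    ('g set set set \<times> 'g set set set) set" where
  "ev_tilde G R = tensor_map (scott_frame (free_frame G)) (pres_frame G R) id (iX G R) (ev G)"

end

theory Submission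
  imports Defs
begin

(* Write [W] for the class in O X of an element W of the free frame, and \<And>K for the
  generator conjunction of a finite K \<subseteq> G (the upset fin_up G K).  For u a C-ideal, let
  coslice K be the largest a with (a, [\<And>K]) \<in> u.  As u is closed under joins in its second
  variable and every W is the join of the \<And>K below it, slice a = {K. a \<le> coslice K} is the
  largest W with (a, [W]) \<in> u.  The transpose v S = \<Squnion>{a. slice a \<in> S} preserves joins
  trivially and binary meets by distributivity, slice being antitone and S an upper set.
  If (S, W) \<in> ev then W \<le> slice a for every a in that join, so (v S, [W]) \<in> u; conversely
  (a, [\<And>K]) \<in> u means a \<le> coslice K = v {W. \<And>K \<le> W}, an image of ev. *)

lemma fsup_eqI:
  assumes "\<forall>a\<in>fcar F. \<forall>b\<in>fcar F. fle F a b \<and> fle F b a \<longrightarrow> a = b" and "is_lub F S x"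
  shows "fsup F S = x"
  unfolding fsup_def by (rule the_equality) (use assms in \<open>auto simp: is_lub_def\<close>)

lemma fmeet_eqI:
  assumes "\<forall>a\<in>fcar F. \<forall>b\<in>fcar F. fle F a b \<and> fle F b a \<longrightarrow> a = b" and "is_glb F {a, b} x"
  shows "fmeet F a b = x"
  unfolding fmeet_def by (rule the_equality) (use assms in \<open>auto simp: is_glb_def\<close>)

lemma fmeet_commute: "fmeet F a b = fmeet F b a"
  unfolding fmeet_def by (simp add: insert_commute)

locale frame =
  fixes A :: "('a, 'b) frm_scheme"
  assumes is_frame: "is_frame A"
begin

lemma le_refl: "a \<in> fcar A \<Longrightarrow> fle A a a"
  using is_frame unfolding is_frame_def by (elim conjE) blast

lemma le_antisym: "\<forall>a\<in>fcar A. \<forall>b\<in>fcar A. fle A a b \<and> fle A b a \<longrightarrow> a = b"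
  using is_frame unfolding is_frame_def by (elim conjE)

lemma le_antisymI: "a \<in> fcar A \<Longrightarrow> b \<in> fcar A \<Longrightarrow> fle A a b \<Longrightarrow> fle A b a \<Longrightarrow> a = b"
  using le_antisym by blast

lemma le_trans:
  "a \<in> fcar A \<Longrightarrow> b \<in> fcar A \<Longrightarrow> c \<in> fcar A \<Longrightarrow> fle A a b \<Longrightarrow> fle A b c \<Longrightarrow> fle A a c"
  using is_frame unfolding is_frame_def by (elim conjE) blast

lemma fmeet_fsup_distrib:
  "a \<in> fcar A \<Longrightarrow> S \<subseteq> fcar A \<Longrightarrow> fmeet A a (fsup A S) = fsup A (fmeet A a ` S)"
  using is_frame unfolding is_frame_def by (elim conjE) blast

lemma is_lub_fsup: "S \<subseteq> fcar A \<Longrightarrow> is_lub A S (fsup A S)"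
proof -
  assume "S \<subseteq> fcar A"
  moreover have "\<forall>S. S \<subseteq> fcar A \<longrightarrow> (\<exists>x. is_lub A S x)"
    using is_frame unfolding is_frame_def by (elim conjE)
  ultimately obtain x where "is_lub A S x" by blast
  then show ?thesis using fsup_eqI[OF le_antisym] by simp
qed

lemma fsup_closed: "S \<subseteq> fcar A \<Longrightarrow> fsup A S \<in> fcar A"
  and fsup_upper: "S \<subseteq> fcar A \<Longrightarrow> s \<in> S \<Longrightarrow> fle A s (fsup A S)"
  and fsup_least: "S \<subseteq> fcar A \<Longrightarrow> y \<in> fcar A \<Longrightarrow> (\<And>s. s \<in> S \<Longrightarrow> fle A s y) \<Longrightarrow> fle A (fsup A S) y"
  using is_lub_fsup unfolding is_lub_def by blast+

lemma fsup_mono: "S' \<subseteq> fcar A \<Longrightarrow> S \<subseteq> S' \<Longrightarrow> fle A (fsup A S) (fsup A S')"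
  by (rule fsup_least) (auto intro: fsup_closed fsup_upper)

lemma is_glb_fmeet:
  assumes "a \<in> fcar A" "b \<in> fcar A"
  shows "is_glb A {a, b} (fmeet A a b)"
proof -
  let ?L = "{c \<in> fcar A. fle A c a \<and> fle A c b}"
  have "is_glb A {a, b} (fsup A ?L)"
    using assms unfolding is_glb_def
    by (auto intro!: fsup_closed fsup_least fsup_upper)
  then show ?thesis using fmeet_eqI[OF le_antisym] by simp
qed

lemma fmeet_closed: "a \<in> fcar A \<Longrightarrow> b \<in> fcar A \<Longrightarrow> fmeet A a b \<in> fcar A"
  and fmeet_lower1: "a \<in> fcar A \<Longrightarrow> b \<in> fcar A \<Longrightarrow> fle A (fmeet A a b) a"
  and fmeet_lower2: "a \<in> fcar A \<Longrightarrow> b \<in> fcar A \<Longrightarrow> fle A (fmeet A a b) b"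
  and fmeet_greatest: "a \<in> fcar A \<Longrightarrow> b \<in> fcar A \<Longrightarrow> y \<in> fcar A \<Longrightarrow>
      fle A y a \<Longrightarrow> fle A y b \<Longrightarrow> fle A y (fmeet A a b)"
  using is_glb_fmeet unfolding is_glb_def by blast+

lemma fsup_UN:
  assumes "\<And>i. i \<in> I \<Longrightarrow> X i \<subseteq> fcar A"
  shows "fsup A (\<Union>i\<in>I. X i) = fsup A ((\<lambda>i. fsup A (X i)) ` I)"
proof (rule le_antisymI)
  have U: "(\<Union>i\<in>I. X i) \<subseteq> fcar A" and V: "(\<lambda>i. fsup A (X i)) ` I \<subseteq> fcar A"
    using assms fsup_closed by blast+
  show "fsup A (\<Union>i\<in>I. X i) \<in> fcar A" using U by (rule fsup_closed)
  show "fsup A ((\<lambda>i. fsup A (X i)) ` I) \<in> fcar A" using V by (rule fsup_closed)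
  show "fle A (fsup A (\<Union>i\<in>I. X i)) (fsup A ((\<lambda>i. fsup A (X i)) ` I))"
  proof (rule fsup_least[OF U fsup_closed[OF V]])
    fix s assume "s \<in> (\<Union>i\<in>I. X i)"
    then obtain i where i: "i \<in> I" "s \<in> X i" by blast
    show "fle A s (fsup A ((\<lambda>i. fsup A (X i)) ` I))"
      using le_trans[OF _ fsup_closed[OF assms] fsup_closed[OF V]] fsup_upper[OF assms]
        fsup_upper[OF V] i assms
      by blast
  qed
  show "fle A (fsup A ((\<lambda>i. fsup A (X i)) ` I)) (fsup A (\<Union>i\<in>I. X i))"
    using U by (auto intro!: fsup_least[OF V fsup_closed[OF U]] fsup_mono)
qed

lemma fmeet_fsup_fsup:
  assumes "X \<subseteq> fcar A" "Y \<subseteq> fcar A"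
  shows "fmeet A (fsup A X) (fsup A Y) = fsup A (\<Union>x\<in>X. fmeet A x ` Y)"
proof -
  have "fmeet A (fsup A Y) x = fsup A (fmeet A x ` Y)" if "x \<in> X" for x
    using fmeet_fsup_distrib[of x Y] that assms by (auto simp: fmeet_commute[of A "fsup A Y"])
  then have "fmeet A (fsup A X) (fsup A Y) = fsup A ((\<lambda>x. fsup A (fmeet A x ` Y)) ` X)"
    using fmeet_fsup_distrib[OF fsup_closed] assms
    by (simp add: fmeet_commute[of A "fsup A X"] cong: image_cong)
  also have "\<dots> = fsup A (\<Union>x\<in>X. fmeet A x ` Y)"
    using assms fmeet_closed by (intro fsup_UN[symmetric]) blast
  finally show ?thesis .
qed

end

lemma free_frame_simps [simp]:
  "fcar (free_frame G) = free_frame_car G" "fle (free_frame G) = (\<subseteq>)"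
  by (simp_all add: free_frame_def)

lemma mem_free_frame_car_iff:
  "U \<in> free_frame_car G \<longleftrightarrow> (\<forall>F\<in>U. finite F \<and> F \<subseteq> G) \<and>
     (\<forall>F\<in>U. \<forall>F'. finite F' \<and> F \<subseteq> F' \<and> F' \<subseteq> G \<longrightarrow> F' \<in> U)"
  unfolding free_frame_car_def by auto

lemma Union_mem_free_frame_car: "W \<subseteq> free_frame_car G \<Longrightarrow> \<Union>W \<in> free_frame_car G"
  unfolding free_frame_car_def by blast

lemma Int_mem_free_frame_car:
  "U \<in> free_frame_car G \<Longrightarrow> V \<in> free_frame_car G \<Longrightarrow> U \<inter> V \<in> free_frame_car G"
  unfolding free_frame_car_def by auto

lemma free_frame_fsup: "W \<subseteq> free_frame_car G \<Longrightarrow> fsup (free_frame G) W = \<Union>W"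
  by (rule fsup_eqI) (auto simp: is_lub_def Union_mem_free_frame_car)

lemma free_frame_fmeet:
  "U \<in> free_frame_car G \<Longrightarrow> V \<in> free_frame_car G \<Longrightarrow> fmeet (free_frame G) U V = U \<inter> V"
  by (rule fmeet_eqI) (auto simp: is_glb_def Int_mem_free_frame_car)

definition fin_up :: "'g set \<Rightarrow> 'g set \<Rightarrow> 'g set set" where
  "fin_up G F = {F'. finite F' \<and> F \<subseteq> F' \<and> F' \<subseteq> G}"

lemma fin_up_mem_free_frame_car: "fin_up G F \<in> free_frame_car G"
  unfolding mem_free_frame_car_iff fin_up_def by auto

lemma fin_up_antimono: "F \<subseteq> F' \<Longrightarrow> fin_up G F' \<subseteq> fin_up G F"
  unfolding fin_up_def by auto

lemma fin_up_subset: "W \<in> free_frame_car G \<Longrightarrow> F \<in> W \<Longrightarrow> fin_up G F \<subseteq> W"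
  unfolding free_frame_car_def fin_up_def by auto

lemma free_frame_car_eq_UN_fin_up: "W \<in> free_frame_car G \<Longrightarrow> W = (\<Union>F\<in>W. fin_up G F)"
  using fin_up_subset[of W G] unfolding free_frame_car_def fin_up_def by auto

lemma frame_congruence_Inter:
  assumes "C \<noteq> {}" and "\<And>\<theta>. \<theta> \<in> C \<Longrightarrow> frame_congruence F \<theta>"
  shows "frame_congruence F (\<Inter>C)"
proof -
  have equiv: "\<forall>\<theta>\<in>C. equiv (fcar F) \<theta>"
    using assms(2) unfolding frame_congruence_def by blast
  have "equiv (fcar F) (\<Inter>C)"
  proof (rule equivI)
    show "\<Inter>C \<subseteq> fcar F \<times> fcar F" using equiv assms(1) unfolding equiv_def by blast
    show "refl_on (fcar F) (\<Inter>C)" using equiv unfolding equiv_def refl_on_def by blast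
    show "sym (\<Inter>C)" using equiv unfolding equiv_def sym_def by blast
    show "trans (\<Inter>C)" using equiv unfolding equiv_def trans_def by blast
  qed
  moreover have "(fmeet F a c, fmeet F b d) \<in> \<Inter>C"
    if "(a, b) \<in> \<Inter>C" "(c, d) \<in> \<Inter>C" for a b c d
    using assms(2) that unfolding frame_congruence_def by blast
  moreover have "(fsup F (fst ` P), fsup F (snd ` P)) \<in> \<Inter>C" if "P \<subseteq> \<Inter>C" for P
  proof
    fix \<theta> assume "\<theta> \<in> C"
    then have "frame_congruence F \<theta>" "P \<subseteq> \<theta>" using assms(2) that by auto
    then show "(fsup F (fst ` P), fsup F (snd ` P)) \<in> \<theta>" unfolding frame_congruence_def by blast
  qed
  ultimately show ?thesis unfolding frame_congruence_def by blast
qed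

lemma frame_congruence_free_frame_full:
  "frame_congruence (free_frame G) (free_frame_car G \<times> free_frame_car G)"
proof -
  have "fsup (free_frame G) (f ` P) \<in> free_frame_car G"
    if "P \<subseteq> free_frame_car G \<times> free_frame_car G" and "f = fst \<or> f = snd"
    for P and f :: "'a set set \<times> 'a set set \<Rightarrow> 'a set set"
  proof -
    have "f ` P \<subseteq> free_frame_car G" using that by auto
    then show ?thesis by (simp add: free_frame_fsup Union_mem_free_frame_car)
  qed
  then show ?thesis unfolding frame_congruence_def
    by (auto simp: equiv_def refl_on_def sym_def trans_def free_frame_fmeet Int_mem_free_frame_car)
qed

lemma frame_congruence_gen_congruence:
  assumes "R \<subseteq> free_frame_car G \<times> free_frame_car G"
  shows "frame_congruence (free_frame G) (gen_congruence (free_frame G) R)"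
  unfolding gen_congruence_def
  using assms frame_congruence_free_frame_full[of G] by (auto intro!: frame_congruence_Inter)

lemma scott_frame_simps [simp]: "fcar (scott_frame F) = scott_opens F" "fle (scott_frame F) = (\<subseteq>)"
  by (simp_all add: scott_frame_def)

lemma scott_opens_subset: "S \<in> scott_opens F \<Longrightarrow> S \<subseteq> fcar F"
  unfolding scott_opens_def by simp

lemma scott_opens_upclosed: "S \<in> scott_opens F \<Longrightarrow> x \<in> S \<Longrightarrow> y \<in> fcar F \<Longrightarrow> fle F x y \<Longrightarrow> y \<in> S"
  unfolding scott_opens_def by simp

lemma scott_opens_inaccessible:
  "S \<in> scott_opens F \<Longrightarrow> D \<subseteq> fcar F \<Longrightarrow> directed_in F D \<Longrightarrow> fsup F D \<in> S \<Longrightarrow> \<exists>d\<in>D. d \<in> S"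
  unfolding scott_opens_def by simp

lemma Union_mem_scott_opens:
  assumes "T \<subseteq> scott_opens F"
  shows "\<Union>T \<in> scott_opens F"
  unfolding scott_opens_def
proof (intro CollectI conjI allI ballI impI)
  show "\<Union>T \<subseteq> fcar F" using assms scott_opens_subset by blast
  show "y \<in> \<Union>T" if "x \<in> \<Union>T" "y \<in> fcar F" "fle F x y" for x y
    using that assms scott_opens_upclosed[of _ F x y] by blast
  show "\<exists>d\<in>D. d \<in> \<Union>T" if "D \<subseteq> fcar F \<and> directed_in F D \<and> fsup F D \<in> \<Union>T" for D
    using that assms scott_opens_inaccessible[of _ F D] by blast
qed

lemma Int_mem_scott_opens:
  assumes S: "S \<in> scott_opens F" and S': "S' \<in> scott_opens F"
  shows "S \<inter> S' \<in> scott_opens F"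
  unfolding scott_opens_def
proof (intro CollectI conjI allI ballI impI)
  show "S \<inter> S' \<subseteq> fcar F" using S scott_opens_subset by blast
  show "y \<in> S \<inter> S'" if "x \<in> S \<inter> S'" "y \<in> fcar F" "fle F x y" for x y
    using that S S' scott_opens_upclosed[of _ F x y] by blast
  fix D assume D: "D \<subseteq> fcar F \<and> directed_in F D \<and> fsup F D \<in> S \<inter> S'"
  then obtain d d' where "d \<in> D" "d \<in> S" "d' \<in> D" "d' \<in> S'"
    using S S' scott_opens_inaccessible by (metis IntD1 IntD2)
  moreover from this obtain e where "e \<in> D" "fle F d e" "fle F d' e"
    using D unfolding directed_in_def by blast
  ultimately show "\<exists>e\<in>D. e \<in> S \<inter> S'"
    using D S S' scott_opens_upclosed[of _ F _ e] by blast
qed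

lemma scott_frame_fsup: "T \<subseteq> scott_opens F \<Longrightarrow> fsup (scott_frame F) T = \<Union>T"
  by (rule fsup_eqI) (auto simp: is_lub_def Union_mem_scott_opens)

lemma scott_frame_fmeet:
  "S \<in> scott_opens F \<Longrightarrow> S' \<in> scott_opens F \<Longrightarrow> fmeet (scott_frame F) S S' = S \<inter> S'"
  by (rule fmeet_eqI) (auto simp: is_glb_def Int_mem_scott_opens)

lemma scott_frame_ftop: "ftop (scott_frame F) = fcar F"
proof -
  have "fcar F \<in> scott_opens F" unfolding scott_opens_def directed_in_def by blast
  then have "\<Union>(scott_opens F) = fcar F" using scott_opens_subset by blast
  then show ?thesis unfolding ftop_def by (simp add: scott_frame_fsup)
qed

lemma is_CidealI:
  assumes "D \<subseteq> fcar F1 \<times> fcar F2"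
    and "\<And>a b a' b'. (a, b) \<in> D \<Longrightarrow> a' \<in> fcar F1 \<Longrightarrow> b' \<in> fcar F2 \<Longrightarrow>
           fle F1 a' a \<Longrightarrow> fle F2 b' b \<Longrightarrow> (a', b') \<in> D"
    and "\<And>a S. a \<in> fcar F1 \<Longrightarrow> S \<subseteq> fcar F2 \<Longrightarrow> {a} \<times> S \<subseteq> D \<Longrightarrow> (a, fsup F2 S) \<in> D"
    and "\<And>b S. b \<in> fcar F2 \<Longrightarrow> S \<subseteq> fcar F1 \<Longrightarrow> S \<times> {b} \<subseteq> D \<Longrightarrow> (fsup F1 S, b) \<in> D"
  shows "is_Cideal F1 F2 D"
  unfolding is_Cideal_def
  apply (intro conjI)
     apply (rule assms(1))
    apply (intro allI impI; elim conjE; rule assms(2); assumption)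
   apply (intro allI ballI impI; elim conjE; rule assms(3); assumption)
  apply (intro allI ballI impI; elim conjE; rule assms(4); assumption)
  done

lemma Cideal_subset: "is_Cideal F1 F2 D \<Longrightarrow> D \<subseteq> fcar F1 \<times> fcar F2"
  unfolding is_Cideal_def by (elim conjE)

lemma Cideal_downclosed:
  assumes "is_Cideal F1 F2 D" "(a, b) \<in> D" "a' \<in> fcar F1" "b' \<in> fcar F2" "fle F1 a' a" "fle F2 b' b"
  shows "(a', b') \<in> D"
proof -
  have "\<forall>a b a' b'. (a, b) \<in> D \<and> a' \<in> fcar F1 \<and> b' \<in> fcar F2 \<and> fle F1 a' a \<and> fle F2 b' b
      \<longrightarrow> (a', b') \<in> D"
    using assms(1) unfolding is_Cideal_def by (elim conjE)
  then show ?thesis using assms(2-) by simp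
qed

lemma Cideal_fsup_right:
  assumes "is_Cideal F1 F2 D" "a \<in> fcar F1" "S \<subseteq> fcar F2" "{a} \<times> S \<subseteq> D"
  shows "(a, fsup F2 S) \<in> D"
proof -
  have "\<forall>a\<in>fcar F1. \<forall>S. S \<subseteq> fcar F2 \<and> {a} \<times> S \<subseteq> D \<longrightarrow> (a, fsup F2 S) \<in> D"
    using assms(1) unfolding is_Cideal_def by (elim conjE)
  then show ?thesis using assms(2-) by simp
qed

lemma Cideal_fsup_left:
  assumes "is_Cideal F1 F2 D" "b \<in> fcar F2" "S \<subseteq> fcar F1" "S \<times> {b} \<subseteq> D"
  shows "(fsup F1 S, b) \<in> D"
proof -
  have "\<forall>b\<in>fcar F2. \<forall>S. S \<subseteq> fcar F1 \<and> S \<times> {b} \<subseteq> D \<longrightarrow> (fsup F1 S, b) \<in> D"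
    using assms(1) unfolding is_Cideal_def by (elim conjE)
  then show ?thesis using assms(2-) by simp
qed

lemma Cideal_closure_least: "is_Cideal F1 F2 D \<Longrightarrow> P \<subseteq> D \<Longrightarrow> Cideal_closure F1 F2 P \<subseteq> D"
  unfolding Cideal_closure_def by blast

lemma Cideal_closure_upper: "P \<subseteq> Cideal_closure F1 F2 P"
  unfolding Cideal_closure_def by blast

lemma is_Cideal_full:
  assumes "\<And>S. S \<subseteq> fcar F1 \<Longrightarrow> fsup F1 S \<in> fcar F1"
    and "\<And>S. S \<subseteq> fcar F2 \<Longrightarrow> fsup F2 S \<in> fcar F2"
  shows "is_Cideal F1 F2 (fcar F1 \<times> fcar F2)"
  by (rule is_CidealI) (use assms in auto)

lemma is_Cideal_Cideal_closure:
  assumes "is_Cideal F1 F2 (fcar F1 \<times> fcar F2)" and "P \<subseteq> fcar F1 \<times> fcar F2"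
  shows "is_Cideal F1 F2 (Cideal_closure F1 F2 P)"
proof -
  let ?C = "{D. is_Cideal F1 F2 D \<and> P \<subseteq> D}"
  have "fcar F1 \<times> fcar F2 \<in> ?C" using assms by blast
  then show ?thesis unfolding Cideal_closure_def
  proof (intro is_CidealI)
    fix a b a' b' assume "(a, b) \<in> \<Inter>?C" "a' \<in> fcar F1" "b' \<in> fcar F2" "fle F1 a' a" "fle F2 b' b"
    then show "(a', b') \<in> \<Inter>?C" using Cideal_downclosed[of F1 F2 _ a b a' b'] by blast
  next
    fix a S assume "a \<in> fcar F1" "S \<subseteq> fcar F2" "{a} \<times> S \<subseteq> \<Inter>?C"
    then show "(a, fsup F2 S) \<in> \<Inter>?C" using Cideal_fsup_right[of F1 F2 _ a S] by blast
  next
    fix b S assume "b \<in> fcar F2" "S \<subseteq> fcar F1" "S \<times> {b} \<subseteq> \<Inter>?C"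
    then show "(fsup F1 S, b) \<in> \<Inter>?C" using Cideal_fsup_left[of F1 F2 _ b S] by blast
  qed blast
qed

lemma mem_tensor_map: "(a, b) \<in> D \<Longrightarrow> (f a, g b) \<in> tensor_map F1 F2 f g D"
  unfolding tensor_map_def by (rule subsetD[OF Cideal_closure_upper]) force

lemma is_Cideal_vimage:
  assumes D: "is_Cideal F1' F2 D"
    and h_closed: "\<And>a. a \<in> fcar F1 \<Longrightarrow> h a \<in> fcar F1'"
    and h_mono: "\<And>a b. a \<in> fcar F1 \<Longrightarrow> b \<in> fcar F1 \<Longrightarrow> fle F1 a b \<Longrightarrow> fle F1' (h a) (h b)"
    and h_fsup: "\<And>S. S \<subseteq> fcar F1 \<Longrightarrow> h (fsup F1 S) = fsup F1' (h ` S)"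
    and F1_fsup: "\<And>S. S \<subseteq> fcar F1 \<Longrightarrow> fsup F1 S \<in> fcar F1"
    and F2_fsup: "\<And>S. S \<subseteq> fcar F2 \<Longrightarrow> fsup F2 S \<in> fcar F2"
  shows "is_Cideal F1 F2 {(a, b) \<in> fcar F1 \<times> fcar F2. (h a, b) \<in> D}"
    (is "is_Cideal F1 F2 ?E")
proof (rule is_CidealI)
  show "?E \<subseteq> fcar F1 \<times> fcar F2" by blast
next
  fix a b a' b' assume "(a, b) \<in> ?E" and a': "a' \<in> fcar F1" and b': "b' \<in> fcar F2"
    and le: "fle F1 a' a" "fle F2 b' b"
  then have "a \<in> fcar F1" "(h a, b) \<in> D" by auto
  then have "(h a', b') \<in> D"
    using Cideal_downclosed[OF D _ h_closed[OF a'] b' h_mono[OF a' _ le(1)] le(2)] by simp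
  then show "(a', b') \<in> ?E" using a' b' by simp
next
  fix a S assume a: "a \<in> fcar F1" and S: "S \<subseteq> fcar F2" and "{a} \<times> S \<subseteq> ?E"
  then have "{h a} \<times> S \<subseteq> D" by auto
  then have "(h a, fsup F2 S) \<in> D" by (rule Cideal_fsup_right[OF D h_closed[OF a] S])
  then show "(a, fsup F2 S) \<in> ?E" using a F2_fsup[OF S] by simp
next
  fix b S assume b: "b \<in> fcar F2" and S: "S \<subseteq> fcar F1" and "S \<times> {b} \<subseteq> ?E"
  then have "h ` S \<times> {b} \<subseteq> D" by auto
  then have "(fsup F1' (h ` S), b) \<in> D"
    using h_closed S by (intro Cideal_fsup_left[OF D b]) auto
  then show "(fsup F1 S, b) \<in> ?E" using h_fsup[OF S] F1_fsup[OF S] b by simp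
qed

locale presentation =
  fixes G :: "'g set" and R :: "('g set set \<times> 'g set set) set"
  assumes relations_free_frame_car: "R \<subseteq> free_frame_car G \<times> free_frame_car G"
begin

abbreviation "\<Omega> \<equiv> free_frame_car G"
abbreviation "\<theta> \<equiv> gen_congruence (free_frame G) R"
abbreviation "OX \<equiv> pres_frame G R"

lemma congruence: "frame_congruence (free_frame G) \<theta>"
  using frame_congruence_gen_congruence[OF relations_free_frame_car] .

lemma equiv_congruence: "equiv \<Omega> \<theta>"
  using congruence unfolding frame_congruence_def by simp

lemma congruence_refl: "U \<in> \<Omega> \<Longrightarrow> (U, U) \<in> \<theta>"
  using equiv_congruence unfolding equiv_def refl_on_def by blast

lemma congruence_sym: "(U, V) \<in> \<theta> \<Longrightarrow> (V, U) \<in> \<theta>"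
  using equiv_congruence unfolding equiv_def sym_def by blast

lemma congruence_trans: "(U, V) \<in> \<theta> \<Longrightarrow> (V, W) \<in> \<theta> \<Longrightarrow> (U, W) \<in> \<theta>"
  using equiv_congruence unfolding equiv_def trans_def by blast

lemma congruence_Int: "(U, U') \<in> \<theta> \<Longrightarrow> (V, V') \<in> \<theta> \<Longrightarrow> (U \<inter> V, U' \<inter> V') \<in> \<theta>"
proof -
  assume h: "(U, U') \<in> \<theta>" "(V, V') \<in> \<theta>"
  then have "U \<in> \<Omega>" "U' \<in> \<Omega>" "V \<in> \<Omega>" "V' \<in> \<Omega>"
    using equiv_congruence unfolding equiv_def refl_on_def by blast+
  moreover have "(fmeet (free_frame G) U V, fmeet (free_frame G) U' V') \<in> \<theta>"
    using congruence h unfolding frame_congruence_def by blast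
  ultimately show ?thesis by (simp add: free_frame_fmeet)
qed

lemma congruence_Union: "P \<subseteq> \<theta> \<Longrightarrow> (\<Union>(fst ` P), \<Union>(snd ` P)) \<in> \<theta>"
proof -
  assume h: "P \<subseteq> \<theta>"
  then have "fst ` P \<subseteq> \<Omega>" "snd ` P \<subseteq> \<Omega>"
    using equiv_congruence unfolding equiv_def refl_on_def by auto
  moreover have "(fsup (free_frame G) (fst ` P), fsup (free_frame G) (snd ` P)) \<in> \<theta>"
    using congruence h unfolding frame_congruence_def by blast
  ultimately show ?thesis by (simp add: free_frame_fsup)
qed

lemma iX_mem: "W \<in> \<Omega> \<Longrightarrow> iX G R W \<in> fcar OX"
  by (simp add: pres_frame_def quotient_frame_def iX_def quotientI)

lemma pres_frame_carE:
  assumes "C \<in> fcar OX"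
  obtains W where "W \<in> \<Omega>" "C = iX G R W"
  using assms by (auto simp: pres_frame_def quotient_frame_def iX_def elim!: quotientE)

lemma iX_eq_iff: "U \<in> \<Omega> \<Longrightarrow> V \<in> \<Omega> \<Longrightarrow> iX G R U = iX G R V \<longleftrightarrow> (U, V) \<in> \<theta>"
  unfolding iX_def using equiv_congruence by (rule eq_equiv_class_iff)

lemma iX_le_iff:
  assumes "U \<in> \<Omega>" "V \<in> \<Omega>"
  shows "fle OX (iX G R U) (iX G R V) \<longleftrightarrow> (U \<inter> V, U) \<in> \<theta>"
proof
  assume "(U \<inter> V, U) \<in> \<theta>"
  then have "(fmeet (free_frame G) U V, U) \<in> \<theta>" using assms by (simp add: free_frame_fmeet)
  then show "fle OX (iX G R U) (iX G R V)"
    unfolding pres_frame_def quotient_frame_def iX_def by auto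
next
  assume "fle OX (iX G R U) (iX G R V)"
  then obtain U' V' where h: "iX G R U = iX G R U'" "iX G R V = iX G R V'"
    "(fmeet (free_frame G) U' V', U') \<in> \<theta>"
    by (auto simp: pres_frame_def quotient_frame_def iX_def)
  have "U \<in> iX G R U" "V \<in> iX G R V"
    using assms equiv_congruence unfolding iX_def equiv_def refl_on_def by blast+
  then have U': "(U', U) \<in> \<theta>" and V': "(V', V) \<in> \<theta>"
    using h(1,2) unfolding iX_def by blast+
  then have "U' \<in> \<Omega>" "V' \<in> \<Omega>"
    using equiv_congruence unfolding equiv_def refl_on_def by blast+
  then have "(U' \<inter> V', U') \<in> \<theta>" using h(3) by (simp add: free_frame_fmeet)
  then show "(U \<inter> V, U) \<in> \<theta>"
    using congruence_Int[OF congruence_sym[OF U'] congruence_sym[OF V']] U' congruence_trans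
    by blast
qed

lemma iX_mono: "U \<in> \<Omega> \<Longrightarrow> V \<in> \<Omega> \<Longrightarrow> U \<subseteq> V \<Longrightarrow> fle OX (iX G R U) (iX G R V)"
  by (simp add: iX_le_iff Int_absorb2 congruence_refl)

lemma iX_fin_up_mem: "iX G R (fin_up G K) \<in> fcar OX"
  by (rule iX_mem[OF fin_up_mem_free_frame_car])

lemma iX_fin_up_le_refl: "fle OX (iX G R (fin_up G K)) (iX G R (fin_up G K))"
  by (rule iX_mono) (simp_all add: fin_up_mem_free_frame_car)

lemma pres_frame_antisym: "\<forall>C\<in>fcar OX. \<forall>D\<in>fcar OX. fle OX C D \<and> fle OX D C \<longrightarrow> C = D"
proof (intro ballI impI)
  fix C D assume "C \<in> fcar OX" "D \<in> fcar OX" and le: "fle OX C D \<and> fle OX D C"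
  then obtain U V where UV: "U \<in> \<Omega>" "V \<in> \<Omega>" "C = iX G R U" "D = iX G R V"
    by (metis pres_frame_carE)
  have "(U \<inter> V, U) \<in> \<theta>" "(V \<inter> U, V) \<in> \<theta>" using le UV iX_le_iff by auto
  then have "(U, V) \<in> \<theta>" by (metis inf_commute congruence_sym congruence_trans)
  then show "C = D" using UV iX_eq_iff by simp
qed

lemma is_lub_iX_Union:
  assumes "W \<subseteq> \<Omega>"
  shows "is_lub OX (iX G R ` W) (iX G R (\<Union>W))"
  unfolding is_lub_def
proof (intro conjI ballI impI)
  have U: "\<Union>W \<in> \<Omega>" using assms by (rule Union_mem_free_frame_car)
  show "iX G R (\<Union>W) \<in> fcar OX" using U by (rule iX_mem)
  show "fle OX C (iX G R (\<Union>W))" if "C \<in> iX G R ` W" for C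
    using that assms U iX_mono by blast
  fix D assume "D \<in> fcar OX" and upper: "\<forall>C\<in>iX G R ` W. fle OX C D"
  then obtain V where V: "V \<in> \<Omega>" "D = iX G R V" by (metis pres_frame_carE)
  let ?P = "(\<lambda>U. (U \<inter> V, U)) ` W"
  have "?P \<subseteq> \<theta>" using upper V assms iX_le_iff by auto
  then have "(\<Union>(fst ` ?P), \<Union>(snd ` ?P)) \<in> \<theta>" by (rule congruence_Union)
  moreover have "\<Union>(fst ` ?P) = \<Union>W \<inter> V" "\<Union>(snd ` ?P) = \<Union>W" by auto
  ultimately show "fle OX (iX G R (\<Union>W)) D" using iX_le_iff U V by simp
qed

lemma fsup_iX_image: "W \<subseteq> \<Omega> \<Longrightarrow> fsup OX (iX G R ` W) = iX G R (\<Union>W)"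
  using fsup_eqI[OF pres_frame_antisym is_lub_iX_Union] .

lemma fsup_pres_frame_closed:
  assumes "T \<subseteq> fcar OX"
  shows "fsup OX T \<in> fcar OX"
proof -
  let ?W = "{W \<in> \<Omega>. iX G R W \<in> T}"
  have "T = iX G R ` ?W" using assms by (auto elim!: pres_frame_carE)
  then show ?thesis
    using fsup_iX_image[of ?W] iX_mem Union_mem_free_frame_car[of ?W] by auto
qed

lemma fsup_iX_fin_up: "W \<in> \<Omega> \<Longrightarrow> fsup OX ((\<lambda>F. iX G R (fin_up G F)) ` W) = iX G R W"
  using fsup_iX_image[of "fin_up G ` W"] free_frame_car_eq_UN_fin_up[of W G]
  by (simp add: image_image image_subset_iff fin_up_mem_free_frame_car)

lemma Cideal_iX_iff_fin_up:
  assumes D: "is_Cideal F OX D" and a: "a \<in> fcar F" "fle F a a" and W: "W \<in> \<Omega>"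
  shows "(a, iX G R W) \<in> D \<longleftrightarrow> (\<forall>K\<in>W. (a, iX G R (fin_up G K)) \<in> D)"
proof
  assume "(a, iX G R W) \<in> D"
  then show "\<forall>K\<in>W. (a, iX G R (fin_up G K)) \<in> D"
    using Cideal_downclosed[OF D _ a(1) iX_fin_up_mem a(2)]
      iX_mono[OF fin_up_mem_free_frame_car W fin_up_subset[OF W]] by blast
next
  assume "\<forall>K\<in>W. (a, iX G R (fin_up G K)) \<in> D"
  then have "(a, fsup OX ((\<lambda>K. iX G R (fin_up G K)) ` W)) \<in> D"
    by (intro Cideal_fsup_right[OF D a(1)]) (auto intro: iX_mem fin_up_mem_free_frame_car)
  then show "(a, iX G R W) \<in> D" using fsup_iX_fin_up[OF W] by simp
qed

lemma ev_tilde_subset: "ev_tilde G R \<subseteq> scott_opens (free_frame G) \<times> fcar OX"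
proof -
  have "is_Cideal (scott_frame (free_frame G)) OX (scott_opens (free_frame G) \<times> fcar OX)"
    using is_Cideal_full[of "scott_frame (free_frame G)" OX]
    by (simp add: scott_frame_fsup Union_mem_scott_opens fsup_pres_frame_closed)
  moreover have "(\<lambda>(S, W). (id S, iX G R W)) ` ev G \<subseteq> scott_opens (free_frame G) \<times> fcar OX"
    using iX_mem by (auto simp: ev_def)
  ultimately show ?thesis
    unfolding ev_tilde_def tensor_map_def by (rule Cideal_closure_least)
qed

end

locale Cideal_transpose = presentation G R + frame A
  for G :: "'g set" and R and A :: "('a, 'b) frm_scheme" +
  fixes u :: "('a \<times> 'g set set set) set"
  assumes u_Cideal: "is_Cideal A (pres_frame G R) u"
begin

definition coslice :: "'g set \<Rightarrow> 'a" where
  "coslice K = fsup A {a \<in> fcar A. (a, iX G R (fin_up G K)) \<in> u}"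

definition slice :: "'a \<Rightarrow> 'g set set" where
  "slice a = {K. finite K \<and> K \<subseteq> G \<and> fle A a (coslice K)}"

definition v :: "'g set set set \<Rightarrow> 'a" where
  "v S = fsup A {a \<in> fcar A. slice a \<in> S}"

lemma coslice_closed: "coslice K \<in> fcar A"
  unfolding coslice_def by (rule fsup_closed) blast

lemma le_coslice_iff: "a \<in> fcar A \<Longrightarrow> fle A a (coslice K) \<longleftrightarrow> (a, iX G R (fin_up G K)) \<in> u"
proof
  have "(coslice K, iX G R (fin_up G K)) \<in> u"
    unfolding coslice_def
    by (rule Cideal_fsup_left[OF u_Cideal iX_fin_up_mem]) blast+
  moreover assume "a \<in> fcar A" "fle A a (coslice K)"
  ultimately show "(a, iX G R (fin_up G K)) \<in> u"
    using Cideal_downclosed[OF u_Cideal _ _ iX_fin_up_mem] iX_fin_up_le_refl by blast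
qed (auto simp: coslice_def intro: fsup_upper)

lemma slice_mem: "a \<in> fcar A \<Longrightarrow> slice a \<in> \<Omega>"
  unfolding mem_free_frame_car_iff
proof (intro conjI ballI allI impI)
  fix K K' assume a: "a \<in> fcar A" and "K \<in> slice a" and K': "finite K' \<and> K \<subseteq> K' \<and> K' \<subseteq> G"
  then have "(a, iX G R (fin_up G K)) \<in> u" using le_coslice_iff unfolding slice_def by blast
  then have "(a, iX G R (fin_up G K')) \<in> u"
    using Cideal_downclosed[OF u_Cideal _ a iX_fin_up_mem le_refl[OF a]]
      iX_mono[OF fin_up_mem_free_frame_car fin_up_mem_free_frame_car fin_up_antimono] K' by blast
  then show "K' \<in> slice a" using a K' le_coslice_iff unfolding slice_def by blast
qed (auto simp: slice_def)

lemma mem_u_iff_subset_slice: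
  assumes a: "a \<in> fcar A" and W: "W \<in> \<Omega>"
  shows "(a, iX G R W) \<in> u \<longleftrightarrow> W \<subseteq> slice a"
proof -
  have "\<forall>K\<in>W. finite K \<and> K \<subseteq> G" using W unfolding mem_free_frame_car_iff by blast
  then show ?thesis
    using Cideal_iX_iff_fin_up[OF u_Cideal a le_refl[OF a] W] le_coslice_iff[OF a]
    unfolding slice_def by blast
qed

lemma slice_antimono: "a \<in> fcar A \<Longrightarrow> b \<in> fcar A \<Longrightarrow> fle A b a \<Longrightarrow> slice a \<subseteq> slice b"
  unfolding slice_def using le_trans[OF _ _ coslice_closed] by blast

lemma v_closed: "v S \<in> fcar A"
  unfolding v_def by (rule fsup_closed) blast

lemma v_mono: "S \<subseteq> S' \<Longrightarrow> fle A (v S) (v S')"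
  unfolding v_def by (rule fsup_mono) blast+

lemma v_Union: "v (\<Union>T) = fsup A (v ` T)"
proof -
  have "{a \<in> fcar A. slice a \<in> \<Union>T} = (\<Union>S\<in>T. {a \<in> fcar A. slice a \<in> S})" by blast
  then show ?thesis unfolding v_def by (simp add: fsup_UN[of T])
qed

lemma v_Int:
  assumes S: "S \<in> scott_opens (free_frame G)" and S': "S' \<in> scott_opens (free_frame G)"
  shows "v (S \<inter> S') = fmeet A (v S) (v S')"
proof (rule le_antisymI)
  show "v (S \<inter> S') \<in> fcar A" "fmeet A (v S) (v S') \<in> fcar A"
    by (simp_all add: v_closed fmeet_closed)
  show "fle A (v (S \<inter> S')) (fmeet A (v S) (v S'))"
    by (rule fmeet_greatest[OF v_closed v_closed v_closed]) (auto intro: v_mono)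
  have "fle A (fmeet A a b) (v (S \<inter> S'))"
    if a: "a \<in> fcar A" "slice a \<in> S" and b: "b \<in> fcar A" "slice b \<in> S'" for a b
  proof -
    let ?c = "fmeet A a b"
    have c: "?c \<in> fcar A" "slice ?c \<in> \<Omega>" using a b fmeet_closed slice_mem by blast+
    have "slice ?c \<in> S"
      using scott_opens_upclosed[OF S a(2)] c slice_antimono[OF a(1) c(1) fmeet_lower1[OF a(1) b(1)]]
      by simp
    moreover have "slice ?c \<in> S'"
      using scott_opens_upclosed[OF S' b(2)] c slice_antimono[OF b(1) c(1) fmeet_lower2[OF a(1) b(1)]]
      by simp
    ultimately show ?thesis unfolding v_def using c by (intro fsup_upper) auto
  qed
  then show "fle A (fmeet A (v S) (v S')) (v (S \<inter> S'))"
    unfolding v_def[of S] v_def[of S'] fmeet_fsup_fsup[OF Collect_subset Collect_subset]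
    by (intro fsup_least) (auto intro: fmeet_closed v_closed)
qed

lemma v_top: "v \<Omega> = ftop A"
proof -
  have "{a \<in> fcar A. slice a \<in> \<Omega>} = fcar A" using slice_mem by auto
  then show ?thesis unfolding v_def ftop_def by simp
qed

lemma frame_hom_v: "frame_hom (scott_frame (free_frame G)) A v"
  unfolding frame_hom_def
  by (simp add: v_closed scott_frame_ftop v_top scott_frame_fmeet v_Int scott_frame_fsup v_Union)

definition nbhd :: "'g set \<Rightarrow> 'g set set set" where
  "nbhd K = {V \<in> \<Omega>. K \<in> V}"

lemma nbhd_mem_scott_opens: "nbhd K \<in> scott_opens (free_frame G)"
  unfolding scott_opens_def
proof (intro CollectI conjI ballI allI impI)
  fix D assume D: "D \<subseteq> fcar (free_frame G) \<and> directed_in (free_frame G) D \<and>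
    fsup (free_frame G) D \<in> nbhd K"
  then have "K \<in> \<Union>D" using free_frame_fsup[of D G] unfolding nbhd_def by auto
  then show "\<exists>V\<in>D. V \<in> nbhd K" using D unfolding nbhd_def by auto
qed (auto simp: nbhd_def)

lemma nbhd_fin_up_mem_ev: "(nbhd K, fin_up G K) \<in> ev G"
proof -
  have "fin_up G K \<subseteq> V" if "V \<in> nbhd K" for V
    using that fin_up_subset unfolding nbhd_def by blast
  then show ?thesis
    unfolding ev_def using nbhd_mem_scott_opens fin_up_mem_free_frame_car by blast
qed

lemma v_nbhd:
  assumes "finite K" "K \<subseteq> G"
  shows "v (nbhd K) = coslice K"
proof -
  have "{a \<in> fcar A. slice a \<in> nbhd K} = {a \<in> fcar A. fle A a (coslice K)}"
    using assms slice_mem unfolding nbhd_def slice_def by auto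
  moreover have "fsup A {a \<in> fcar A. fle A a (coslice K)} = coslice K"
    using coslice_closed le_refl
    by (intro le_antisymI fsup_closed fsup_least fsup_upper) auto
  ultimately show ?thesis unfolding v_def by simp
qed

lemma v_ev_mem: "(S, W) \<in> ev G \<Longrightarrow> (v S, iX G R W) \<in> u"
  unfolding ev_def v_def
  by (intro Cideal_fsup_left[OF u_Cideal iX_mem])
    (auto simp: mem_u_iff_subset_slice)

lemma tensor_map_ev_tilde_subset: "tensor_map A OX v id (ev_tilde G R) \<subseteq> u"
proof -
  let ?E = "{(S, C) \<in> scott_opens (free_frame G) \<times> fcar OX. (v S, C) \<in> u}"
  have "is_Cideal (scott_frame (free_frame G)) OX ?E"
    using is_Cideal_vimage[OF u_Cideal, of "scott_frame (free_frame G)" v]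
    by (simp add: v_closed v_mono scott_frame_fsup v_Union Union_mem_scott_opens
        fsup_pres_frame_closed)
  moreover have "(\<lambda>(S, W). (id S, iX G R W)) ` ev G \<subseteq> ?E"
    using v_ev_mem iX_mem by (auto simp: ev_def)
  ultimately have "ev_tilde G R \<subseteq> ?E"
    unfolding ev_tilde_def tensor_map_def by (rule Cideal_closure_least)
  then show ?thesis
    unfolding tensor_map_def by (auto intro!: Cideal_closure_least[OF u_Cideal])
qed

lemma subset_tensor_map_ev_tilde: "u \<subseteq> tensor_map A OX v id (ev_tilde G R)"
proof
  let ?T = "tensor_map A OX v id (ev_tilde G R)"
  have T: "is_Cideal A OX ?T"
    unfolding tensor_map_def
  proof (rule is_Cideal_Cideal_closure)
    show "is_Cideal A OX (fcar A \<times> fcar OX)"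
      by (rule is_Cideal_full) (auto intro: fsup_closed fsup_pres_frame_closed)
    show "(\<lambda>(S, C). (v S, id C)) ` ev_tilde G R \<subseteq> fcar A \<times> fcar OX"
      using ev_tilde_subset v_closed by auto
  qed
  fix p assume "p \<in> u"
  then obtain a W where p: "p = (a, iX G R W)" and a: "a \<in> fcar A" and W: "W \<in> \<Omega>"
    using Cideal_subset[OF u_Cideal] by (fastforce elim: pres_frame_carE)
  have "(a, iX G R (fin_up G K)) \<in> ?T" if "K \<in> W" for K
  proof -
    have K: "finite K" "K \<subseteq> G" using W that unfolding mem_free_frame_car_iff by auto
    have "(v (nbhd K), iX G R (fin_up G K)) \<in> ?T"
      using mem_tensor_map[where f = v and g = id,
          OF mem_tensor_map[where f = id and g = "iX G R", OF nbhd_fin_up_mem_ev]]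
      unfolding ev_tilde_def by simp
    moreover have "fle A a (v (nbhd K))"
      using \<open>p \<in> u\<close> p that a W K
      by (simp add: v_nbhd le_coslice_iff Cideal_iX_iff_fin_up[OF u_Cideal a le_refl[OF a] W])
    ultimately show ?thesis
      using Cideal_downclosed[OF T _ a iX_fin_up_mem] v_closed iX_fin_up_le_refl by blast
  qed
  then show "p \<in> ?T" using p Cideal_iX_iff_fin_up[OF T a le_refl[OF a] W] by blast
qed

end

theorem proposition3p1:
  fixes G :: "'g set"
    and R :: "('g set set \<times> 'g set set) set"
    and A :: "'a frm"
    and u :: "('a \<times> 'g set set set) set"
  assumes "R \<subseteq> free_frame_car G \<times> free_frame_car G"
    and "is_frame A"
    and "u \<in> fcar (tensor A (pres_frame G R))"
  shows "\<exists>v. frame_hom (scott_frame (free_frame G)) A v \<and>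
             u = tensor_map A (pres_frame G R) v id (ev_tilde G R)"
proof -
  interpret Cideal_transpose G R A u
    using assms by unfold_locales (simp_all add: tensor_def)
  show ?thesis
    using frame_hom_v tensor_map_ev_tilde_subset subset_tensor_map_ev_tilde by blast
qed

end
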